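(* In any run of multi-agent dual policy iteration (defined in the context), let $\pi_h$ and $\pi$ denote the joint safety policy and the joint task policy at the end of an outer iteration. Then $$\{x\in\mathcal X: V_h^{\pi}(x)\ge0\}=\{x\in\mathcal X: V_h^{\pi_h}(x)\ge0\}=S_{\rm c}^{\rm new}.$$ These sets are non-decreasing with respect to inclusion across outer iterations. If the joint safety policies converge to $\pi_h^*$ (e.g. under the tie-breaking convention, in which case they are eventually constant), these sets eventually equal $S_{\rm c}^*:=\{x: V_h^{\pi_h^*}(x)\ge0\}$.
   Context: Setting. Let $\mathcal N=\{1,\dots,n\}$ be a finite set of agents, $\mathcal X$ a finite state space, $\mathcal U_i$ a finite action set for agent $i$, $\mathcal U=\prod_{i=1}^n\mathcal U_i$ the joint action space, $f:\mathcal X\times\mathcal U\to\mathcal X$ the deterministic dynamics, $r:\mathcal X\times\mathcal U\to\mathbb R$ a reward, $h:\mathcal X\to\mathbb R$ a constraint function, and $\gamma,\gamma_h\in(0,1)$ discount factors. An individual policy of agent $i$ is a map $\pi_i:\mathcal X\to\mathcal U_i$. A joint policy is $\pi=(\pi_1,\dots,\pi_n)$, with $\pi(x)=(\pi_1(x),\dots,\pi_n(x))$. For a joint action $u$ and an agent $i$, $(u_i',u_{-i})$ denotes $u$ with its $i$-th component replaced by $u_i'$. Safety value function. For a joint policy $\pi$, set $V_h^{\pi}(x)=\min_{t\in\mathbb N}\gamma_h^{t+1}h(x_t)$, where $x_0=x$ and $x_{t+1}=f(x_t,\pi(x_t))$. Value function. Along the same trajectory, set $V^{\pi}(x)=\sum_{t\ge0}\gamma^t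 r(x_t,\pi(x_t))$. Controlled invariant set. $S_{\rm c}^{\pi}=\{x: V_h^{\pi}(x)\ge0\}$. Invariant action set. For a joint policy $\pi_h$, a state $x$, and actions $u_{-i}$ of the agents other than $i$, set $\mathcal U_i^{\pi_h}(x,u_{-i})=\{u_i\in\mathcal U_i: V_h^{\pi_h}(f(x,(u_i,u_{-i})))\ge0\}$. Safety update step. Given the current joint safety policy $\pi_h$ and an ordering $i_1,\dots,i_n$ of $\mathcal N$: for each $x$ and $j=1,\dots,n$ in turn, replace $\pi_{h,i_j}(x)$ by an element of $\arg\max_{v\in\mathcal U_{i_j}}V_h^{\pi_h^{\rm old}}(f(x,w))$. Here $V_h^{\pi_h^{\rm old}}$ is computed for the policy before this step, and $w$ has component $i_j$ equal to $v$, components of earlier agents equal to their already-updated actions, and components of later agents equal to their old actions. Multi-agent dual policy iteration. Start from an initial joint safety policy $\pi_h$, an arbitrary initial joint task policy $\pi$, and $S_{\rm c}=\varnothing$. Each outer iteration consists of: (1) apply the safety update step $K\ge1$ times to $\pi_h$; (2) compute $V^{\pi}$ for the current task policy $\pi$; (3) for every $x\in\mathcal X\setminus S_{\rm c}$, set $\pi(x)\leftarrow\pi_h(x)$; (4) set $S_{\rm c}^{\rm new}=S_{\rm c}^{\pi_h}$; (5) choose an ordering $i_1,\dots,i_n$. For each $x\in S_{\rm c}^{\rm new}$ and $j=1,\dots,n$ in turn, set $$\pi^{\rm new}_{i_j}(x)\in\arg\max_{v\in\mathcal U_{i_j}^{\pi_h}(x,w^{(j)}_{-i_j})}\Big\{r\big(x,(v,w^{(j)}_{-i_j})\big)+\gamma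 V^{\pi}\big(f(x,(v,w^{(j)}_{-i_j}))\big)\Big\},$$ where $w^{(j)}_{-i_j}$ gives agents $i_l$ with $l<j$ their new actions $\pi^{\rm new}_{i_l}(x)$ and agents $i_l$ with $l>j$ their actions under $\pi$ after step (3). For $x\notin S_{\rm c}^{\rm new}$, $\pi^{\rm new}(x)$ is $\pi(x)$ after step (3). Then set $\pi\leftarrow\pi^{\rm new}$; (6) set $S_{\rm c}\leftarrow S_{\rm c}^{\rm new}$. Tie-breaking convention. In every argmax, if the agent's current action is a maximizer, it is selected. Otherwise, a maximizer is selected by a fixed deterministic rule. *)

theory Defs
  imports Complex_Main
begin

text \<open>Agents: elements of a finite type 'i. Actions: a type 'a, agent i restricted
  to the finite set U i. A joint action is a function 'i \<Rightarrow> 'a; a joint policy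
  is a map 'x \<Rightarrow> 'i \<Rightarrow> 'a. States: finite type 'x.\<close>

definition traj :: "('x \<Rightarrow> ('i \<Rightarrow> 'a) \<Rightarrow> 'x) \<Rightarrow> ('x \<Rightarrow> 'i \<Rightarrow> 'a) \<Rightarrow> 'x \<Rightarrow> nat \<Rightarrow> 'x" where
  "traj f p x t = ((\<lambda>y. f y (p y)) ^^ t) x"

text \<open>Safety value: infimum over t of gamma_h^(t+1) h(x_t) (the minimum in the paper;
  the infimum coincides with it whenever it is attained).\<close>
definition safety_value ::
  "real \<Rightarrow> ('x \<Rightarrow> real) \<Rightarrow> ('x \<Rightarrow> ('i \<Rightarrow> 'a) \<Rightarrow> 'x) \<Rightarrow> ('x \<Rightarrow> 'i \<Rightarrow> 'a) \<Rightarrow> 'x \<Rightarrow> real" where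
  "safety_value \<gamma>h h f p x = (INF t. \<gamma>h ^ Suc t * h (traj f p x t))"

definition task_value ::
  "real \<Rightarrow> ('x \<Rightarrow> ('i \<Rightarrow> 'a) \<Rightarrow> real) \<Rightarrow> ('x \<Rightarrow> ('i \<Rightarrow> 'a) \<Rightarrow> 'x) \<Rightarrow> ('x \<Rightarrow> 'i \<Rightarrow> 'a) \<Rightarrow> 'x \<Rightarrow> real" where
  "task_value \<gamma> r f p x = (\<Sum>t. \<gamma> ^ t * r (traj f p x t) (p (traj f p x t)))"

definition is_ordering :: "'i list \<Rightarrow> bool" where
  "is_ordering os \<longleftrightarrow> distinct os \<and> set os = UNIV"

fun greedy_chain ::
  "(('i \<Rightarrow> 'a) \<Rightarrow> 'i \<Rightarrow> 'a set) \<Rightarrow> (('i \<Rightarrow> 'a) \<Rightarrow> real) \<Rightarrow> 'i list \<Rightarrow> ('i \<Rightarrow> 'a) \<Rightarrow> ('i \<Rightarrow> 'a) \<Rightarrow> bool" where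
  "greedy_chain A g [] w w' \<longleftrightarrow> w' = w"
| "greedy_chain A g (i # is) w w' \<longleftrightarrow>
     (\<exists>v \<in> A w i. (\<forall>v' \<in> A w i. g (w(i := v')) \<le> g (w(i := v)))
                \<and> greedy_chain A g is (w(i := v)) w')"

definition safety_update ::
  "('i \<Rightarrow> 'a set) \<Rightarrow> ('x \<Rightarrow> ('i \<Rightarrow> 'a) \<Rightarrow> 'x) \<Rightarrow> ('x \<Rightarrow> real) \<Rightarrow> real
   \<Rightarrow> ('x \<Rightarrow> 'i \<Rightarrow> 'a) \<Rightarrow> ('x \<Rightarrow> 'i \<Rightarrow> 'a) \<Rightarrow> bool" where
  "safety_update U f h \<gamma>h p p' \<longleftrightarrow>
     (\<exists>os. is_ordering os \<and>
        (\<forall>x. greedy_chain (\<lambda>w i. U i) (\<lambda>u. safety_value \<gamma>h h f p (f x u)) os (p x) (p' x)))"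

definition invariant_actions ::
  "('i \<Rightarrow> 'a set) \<Rightarrow> ('x \<Rightarrow> ('i \<Rightarrow> 'a) \<Rightarrow> 'x) \<Rightarrow> ('x \<Rightarrow> real) \<Rightarrow> real
   \<Rightarrow> ('x \<Rightarrow> 'i \<Rightarrow> 'a) \<Rightarrow> 'x \<Rightarrow> ('i \<Rightarrow> 'a) \<Rightarrow> 'i \<Rightarrow> 'a set" where
  "invariant_actions U f h \<gamma>h ph x w i =
     {v \<in> U i. safety_value \<gamma>h h f ph (f x (w(i := v))) \<ge> 0}"

definition outer_iter ::
  "('i \<Rightarrow> 'a set) \<Rightarrow> ('x \<Rightarrow> ('i \<Rightarrow> 'a) \<Rightarrow> 'x) \<Rightarrow> ('x \<Rightarrow> ('i \<Rightarrow> 'a) \<Rightarrow> real) \<Rightarrow> ('x \<Rightarrow> real)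
   \<Rightarrow> real \<Rightarrow> real \<Rightarrow> nat
   \<Rightarrow> ('x \<Rightarrow> 'i \<Rightarrow> 'a) \<Rightarrow> ('x \<Rightarrow> 'i \<Rightarrow> 'a) \<Rightarrow> 'x set
   \<Rightarrow> ('x \<Rightarrow> 'i \<Rightarrow> 'a) \<Rightarrow> ('x \<Rightarrow> 'i \<Rightarrow> 'a) \<Rightarrow> 'x set \<Rightarrow> bool" where
  "outer_iter U f r h \<gamma> \<gamma>h K ph p S ph' p' S' \<longleftrightarrow>
     \<comment> \<open>(1) K safety update steps\<close>
     (\<exists>q. q 0 = ph \<and> q K = ph' \<and> (\<forall>m<K. safety_update U f h \<gamma>h (q m) (q (Suc m)))) \<and>
     (let Vt = task_value \<gamma> r f p;                                  \<comment> \<open>(2)\<close>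
          p3 = (\<lambda>x. if x \<in> S then p x else ph' x);                    \<comment> \<open>(3)\<close>
          Snew = {x. safety_value \<gamma>h h f ph' x \<ge> 0}                  \<comment> \<open>(4)\<close>
      in (\<exists>os. is_ordering os \<and>                                      \<comment> \<open>(5)\<close>
            (\<forall>x. if x \<in> Snew
                 then greedy_chain (invariant_actions U f h \<gamma>h ph' x)
                        (\<lambda>u. r x u + \<gamma> * Vt (f x u)) os (p3 x) (p' x)
                 else p' x = p3 x))
         \<and> S' = Snew)                                                  \<comment> \<open>(6)\<close>"

text \<open>A run: ph k, p k, S k are the safety policy, task policy and set S_c after k
  outer iterations (k = 0: initial values).\<close>
definition madpi_run ::
  "('i \<Rightarrow> 'a set) \<Rightarrow> ('x \<Rightarrow> ('i \<Rightarrow> 'a) \<Rightarrow> 'x) \<Rightarrow> ('x \<Rightarrow> ('i \<Rightarrow> 'a) \<Rightarrow> real) \<Rightarrow> ('x \<Rightarrow> real)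
   \<Rightarrow> real \<Rightarrow> real \<Rightarrow> nat
   \<Rightarrow> (nat \<Rightarrow> 'x \<Rightarrow> 'i \<Rightarrow> 'a) \<Rightarrow> (nat \<Rightarrow> 'x \<Rightarrow> 'i \<Rightarrow> 'a) \<Rightarrow> (nat \<Rightarrow> 'x set) \<Rightarrow> bool" where
  "madpi_run U f r h \<gamma> \<gamma>h K ph p S \<longleftrightarrow>
     S 0 = {} \<and>
     (\<forall>k. outer_iter U f r h \<gamma> \<gamma>h K (ph k) (p k) (S k) (ph (Suc k)) (p (Suc k)) (S (Suc k)))"

end

theory Submission
  imports Defs
begin

text \<open>Since \<open>\<gamma>\<^sub>h > 0\<close>, a state is safe for a policy iff \<open>h\<close> is nonnegative along the whole
  trajectory; the safe set is therefore the largest set on which \<open>h \<ge> 0\<close> and which the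
  policy never leaves. Each safety update keeps the old successor of a safe state
  available and only improves on it, so the old safe set stays invariant. The task update
  chooses within the invariant action set, so on \<open>S\<^sub>c\<^sup>new\<close> it stays in \<open>S\<^sub>c\<^sup>new\<close>; outside
  it copies the safety policy, because the previous \<open>S\<^sub>c\<close> is contained in \<open>S\<^sub>c\<^sup>new\<close>.\<close>

definition safe_set :: "real \<Rightarrow> ('x \<Rightarrow> real) \<Rightarrow> ('x \<Rightarrow> ('i \<Rightarrow> 'a) \<Rightarrow> 'x) \<Rightarrow> ('x \<Rightarrow> 'i \<Rightarrow> 'a) \<Rightarrow> 'x set"
  where "safe_set \<gamma>h h f p = {x. 0 \<le> safety_value \<gamma>h h f p x}"

lemma traj_0 [simp]: "traj f p x 0 = x"
  by (simp add: traj_def)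

lemma traj_Suc: "traj f p x (Suc t) = f (traj f p x t) (p (traj f p x t))"
  by (simp add: traj_def)

lemma traj_Suc_shift: "traj f p x (Suc t) = traj f p (f x (p x)) t"
  by (simp add: traj_def funpow_Suc_right del: funpow.simps)

lemma safety_value_nonneg_iff:
  fixes h :: "'x::finite \<Rightarrow> real"
  assumes "0 < \<gamma>h" "\<gamma>h \<le> 1"
  shows "0 \<le> safety_value \<gamma>h h f p x \<longleftrightarrow> (\<forall>t. 0 \<le> h (traj f p x t))"
proof
  define M where "M = Max (range (\<lambda>y. \<bar>h y\<bar>))"
  have "\<bar>h y\<bar> \<le> M" for y
    unfolding M_def by (rule Max_ge) auto
  moreover have "\<bar>\<gamma>h ^ Suc t\<bar> \<le> 1" for t
    using assms power_le_one[of \<gamma>h "Suc t"] by simp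
  ultimately have bound: "\<bar>\<gamma>h ^ Suc t * h y\<bar> \<le> M" for t y
    unfolding abs_mult by (meson abs_ge_zero mult_left_le_one_le order_trans)
  have "-M \<le> \<gamma>h ^ Suc t * h (traj f p x t)" for t
    using bound[of t "traj f p x t"] by linarith
  then have bdd: "bdd_below (range (\<lambda>t. \<gamma>h ^ Suc t * h (traj f p x t)))"
    by (intro bdd_belowI[of _ "-M"]) auto
  assume nonneg: "0 \<le> safety_value \<gamma>h h f p x"
  show "\<forall>t. 0 \<le> h (traj f p x t)"
  proof
    fix t
    have "safety_value \<gamma>h h f p x \<le> \<gamma>h ^ Suc t * h (traj f p x t)"
      unfolding safety_value_def by (rule cINF_lower[OF bdd]) simp
    with nonneg have "0 \<le> \<gamma>h ^ Suc t * h (traj f p x t)"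
      by linarith
    then show "0 \<le> h (traj f p x t)"
      by (metis assms(1) mult_zero_right mult_le_cancel_left_pos zero_less_power)
  qed
next
  assume "\<forall>t. 0 \<le> h (traj f p x t)"
  with assms(1) show "0 \<le> safety_value \<gamma>h h f p x"
    unfolding safety_value_def by (intro cINF_greatest) auto
qed

lemma mem_safe_set_iff:
  fixes h :: "'x::finite \<Rightarrow> real"
  assumes "0 < \<gamma>h" "\<gamma>h \<le> 1"
  shows "x \<in> safe_set \<gamma>h h f p \<longleftrightarrow> 0 \<le> h x \<and> f x (p x) \<in> safe_set \<gamma>h h f p"
proof -
  have "(\<forall>t. 0 \<le> h (traj f p x t)) \<longleftrightarrow> 0 \<le> h x \<and> (\<forall>t. 0 \<le> h (traj f p (f x (p x)) t))"
    by (metis traj_0 traj_Suc_shift not0_implies_Suc)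
  then show ?thesis
    by (simp add: safe_set_def safety_value_nonneg_iff[OF assms])
qed

lemma invariant_subset_safe_set:
  fixes h :: "'x::finite \<Rightarrow> real"
  assumes "0 < \<gamma>h" "\<gamma>h \<le> 1"
    and invariant: "\<And>y. y \<in> A \<Longrightarrow> 0 \<le> h y \<and> f y (p y) \<in> A"
  shows "A \<subseteq> safe_set \<gamma>h h f p"
proof
  fix x assume "x \<in> A"
  then have "traj f p x t \<in> A" for t
    by (induction t) (auto simp: traj_Suc dest: invariant)
  then show "x \<in> safe_set \<gamma>h h f p"
    using invariant by (simp add: safe_set_def safety_value_nonneg_iff[OF assms(1,2)])
qed

lemma greedy_chain_improves:
  assumes "greedy_chain (\<lambda>w i. U i) g os w w'" and "\<forall>i. w i \<in> U i"
  shows "g w \<le> g w' \<and> (\<forall>i. w' i \<in> U i)"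
  using assms
proof (induction os arbitrary: w)
  case (Cons i js)
  from Cons.prems(1) obtain v where v: "v \<in> U i" "\<forall>v'\<in>U i. g (w(i := v')) \<le> g (w(i := v))"
    and chain: "greedy_chain (\<lambda>w i. U i) g js (w(i := v)) w'"
    by auto
  have "g w \<le> g (w(i := v))"
    using v(2) Cons.prems(2) by (metis fun_upd_triv)
  moreover have "\<forall>j. (w(i := v)) j \<in> U j"
    using v(1) Cons.prems(2) by simp
  ultimately show ?case
    using Cons.IH[OF chain] by (meson order_trans)
qed simp

lemma greedy_chain_last_update:
  assumes "greedy_chain A g os w w'" and "os \<noteq> []"
  shows "\<exists>w0 i. \<exists>v \<in> A w0 i. w' = w0(i := v)"
  using assms
proof (induction os arbitrary: w)
  case (Cons i js)
  from Cons.prems(1) obtain v where "v \<in> A w i" and chain: "greedy_chain A g js (w(i := v)) w'"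
    by auto
  then show ?case
    using Cons.IH[OF chain] by (cases js) auto
qed simp

lemma safety_update_safe_set_mono:
  fixes h :: "'x::finite \<Rightarrow> real"
  assumes "0 < \<gamma>h" "\<gamma>h \<le> 1"
    and update: "safety_update U f h \<gamma>h p p'" and admissible: "\<forall>x i. p x i \<in> U i"
  shows "(\<forall>x i. p' x i \<in> U i) \<and> safe_set \<gamma>h h f p \<subseteq> safe_set \<gamma>h h f p'"
proof -
  obtain os where chain: "\<And>x. greedy_chain (\<lambda>w i. U i) (\<lambda>u. safety_value \<gamma>h h f p (f x u)) os (p x) (p' x)"
    using update unfolding safety_update_def by blast
  have improves: "safety_value \<gamma>h h f p (f x (p x)) \<le> safety_value \<gamma>h h f p (f x (p' x))"
    and admissible': "\<forall>i. p' x i \<in> U i" for x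
    using greedy_chain_improves[OF chain[of x]] admissible by simp_all
  have "safe_set \<gamma>h h f p \<subseteq> safe_set \<gamma>h h f p'"
  proof (rule invariant_subset_safe_set[OF assms(1,2)])
    fix y assume "y \<in> safe_set \<gamma>h h f p"
    then have "0 \<le> h y" and "f y (p y) \<in> safe_set \<gamma>h h f p"
      using mem_safe_set_iff[OF assms(1,2)] by blast+
    with improves[of y] show "0 \<le> h y \<and> f y (p' y) \<in> safe_set \<gamma>h h f p"
      by (simp add: safe_set_def)
  qed
  with admissible' show ?thesis by blast
qed

lemma safety_updates_safe_set_mono:
  fixes h :: "'x::finite \<Rightarrow> real"
  assumes "0 < \<gamma>h" "\<gamma>h \<le> 1"
    and updates: "\<forall>m<K. safety_update U f h \<gamma>h (q m) (q (Suc m))"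
    and admissible: "\<forall>x i. q 0 x i \<in> U i" and "m \<le> K"
  shows "(\<forall>x i. q m x i \<in> U i) \<and> safe_set \<gamma>h h f (q 0) \<subseteq> safe_set \<gamma>h h f (q m)"
  using \<open>m \<le> K\<close>
proof (induction m)
  case (Suc m)
  then have "safety_update U f h \<gamma>h (q m) (q (Suc m))"
    using updates by simp
  from safety_update_safe_set_mono[OF assms(1,2) this] Suc show ?case
    by auto
qed (simp add: admissible)

lemma outer_iter_safe_set_eq:
  assumes "outer_iter U f r h \<gamma> \<gamma>h K ph p S ph' p' S'"
  shows "S' = safe_set \<gamma>h h f ph'"
  using assms unfolding outer_iter_def Let_def safe_set_def by auto

lemma outer_iter_safety_mono:
  fixes h :: "'x::finite \<Rightarrow> real"
  assumes "0 < \<gamma>h" "\<gamma>h \<le> 1"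
    and "outer_iter U f r h \<gamma> \<gamma>h K ph p S ph' p' S'" and "\<forall>x i. ph x i \<in> U i"
  shows "(\<forall>x i. ph' x i \<in> U i) \<and> safe_set \<gamma>h h f ph \<subseteq> safe_set \<gamma>h h f ph'"
proof -
  obtain q where q: "q 0 = ph" "q K = ph'" "\<forall>m<K. safety_update U f h \<gamma>h (q m) (q (Suc m))"
    using assms(3) unfolding outer_iter_def by blast
  then show ?thesis
    using safety_updates_safe_set_mono[OF assms(1,2) q(3), of K] assms(4) by simp
qed

lemma outer_iter_task_safe_set:
  fixes h :: "'x::finite \<Rightarrow> real"
  assumes "0 < \<gamma>h" "\<gamma>h \<le> 1"
    and iter: "outer_iter U f r h \<gamma> \<gamma>h K ph p S ph' p' S'"
    and S_safe: "S \<subseteq> safe_set \<gamma>h h f ph'"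
  shows "safe_set \<gamma>h h f p' = safe_set \<gamma>h h f ph'"
proof -
  let ?Snew = "safe_set \<gamma>h h f ph'"
  let ?p3 = "\<lambda>x. if x \<in> S then p x else ph' x"
  obtain os where os: "is_ordering os"
    and step: "\<And>x. if x \<in> ?Snew
      then greedy_chain (invariant_actions U f h \<gamma>h ph' x)
        (\<lambda>u. r x u + \<gamma> * task_value \<gamma> r f p (f x u)) os (?p3 x) (p' x)
      else p' x = ?p3 x"
    using iter unfolding outer_iter_def Let_def safe_set_def by blast
  have "os \<noteq> []"
    using os unfolding is_ordering_def by auto
  have stays: "f x (p' x) \<in> ?Snew" if "x \<in> ?Snew" for x
  proof -
    from step[of x] that have "greedy_chain (invariant_actions U f h \<gamma>h ph' x)
        (\<lambda>u. r x u + \<gamma> * task_value \<gamma> r f p (f x u)) os (?p3 x) (p' x)"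
      by simp
    from greedy_chain_last_update[OF this \<open>os \<noteq> []\<close>] show ?thesis
      unfolding invariant_actions_def safe_set_def by auto
  qed
  have copies: "p' x = ph' x" if "x \<notin> ?Snew" for x
    using step[of x] that S_safe by auto
  have "?Snew \<subseteq> safe_set \<gamma>h h f p'"
  proof (rule invariant_subset_safe_set[OF assms(1,2)])
    fix y assume "y \<in> ?Snew"
    then show "0 \<le> h y \<and> f y (p' y) \<in> ?Snew"
      using stays mem_safe_set_iff[OF assms(1,2)] by blast
  qed
  moreover have "?Snew \<union> safe_set \<gamma>h h f p' \<subseteq> ?Snew"
  proof (rule invariant_subset_safe_set[OF assms(1,2)])
    fix y assume y: "y \<in> ?Snew \<union> safe_set \<gamma>h h f p'"
    show "0 \<le> h y \<and> f y (ph' y) \<in> ?Snew \<union> safe_set \<gamma>h h f p'"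
    proof (cases "y \<in> ?Snew")
      case True
      then show ?thesis
        using mem_safe_set_iff[OF assms(1,2), of y h f ph'] by blast
    next
      case False
      with y have "y \<in> safe_set \<gamma>h h f p'"
        by blast
      then show ?thesis
        using mem_safe_set_iff[OF assms(1,2), of y h f p'] copies[OF False] by simp
    qed
  qed
  ultimately show ?thesis
    by blast
qed

lemma madpi_run_safe_sets:
  fixes h :: "'x::finite \<Rightarrow> real"
  assumes "0 < \<gamma>h" "\<gamma>h \<le> 1"
    and run: "madpi_run U f r h \<gamma> \<gamma>h K ph p S" and admissible: "\<forall>x i. ph 0 x i \<in> U i"
  shows "safe_set \<gamma>h h f (p (Suc k)) = safe_set \<gamma>h h f (ph (Suc k))"
    and "S (Suc k) = safe_set \<gamma>h h f (ph (Suc k))"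
    and "S k \<subseteq> S (Suc k)"
proof -
  have iter: "outer_iter U f r h \<gamma> \<gamma>h K (ph k) (p k) (S k) (ph (Suc k)) (p (Suc k)) (S (Suc k))" for k
    using run unfolding madpi_run_def by blast
  note S_eq = outer_iter_safe_set_eq[OF iter]
  have "\<forall>x i. ph k x i \<in> U i" for k
    by (induction k) (use admissible outer_iter_safety_mono[OF assms(1,2) iter] in auto)
  then have mono: "safe_set \<gamma>h h f (ph k) \<subseteq> safe_set \<gamma>h h f (ph (Suc k))" for k
    using outer_iter_safety_mono[OF assms(1,2) iter] by blast
  have S_mono: "S k \<subseteq> S (Suc k)" for k
    using run mono S_eq by (cases k) (auto simp: madpi_run_def)
  show "S (Suc k) = safe_set \<gamma>h h f (ph (Suc k))" "S k \<subseteq> S (Suc k)"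
    by (fact S_eq S_mono)+
  show "safe_set \<gamma>h h f (p (Suc k)) = safe_set \<gamma>h h f (ph (Suc k))"
    using outer_iter_task_safe_set[OF assms(1,2) iter] S_mono S_eq by blast
qed

theorem proposition3:
  fixes U :: "'i::finite \<Rightarrow> 'a set"
    and f :: "'x::finite \<Rightarrow> ('i \<Rightarrow> 'a) \<Rightarrow> 'x"
    and r :: "'x \<Rightarrow> ('i \<Rightarrow> 'a) \<Rightarrow> real"
    and h :: "'x \<Rightarrow> real"
    and \<gamma> \<gamma>h :: real and K :: nat
    and ph p :: "nat \<Rightarrow> 'x \<Rightarrow> 'i \<Rightarrow> 'a" and S :: "nat \<Rightarrow> 'x set"
  assumes "\<And>i. finite (U i)" and "\<And>i. U i \<noteq> {}"
    and "0 < \<gamma>" and "\<gamma> < 1" and "0 < \<gamma>h" and "\<gamma>h < 1"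
    and "K \<ge> 1"
    and "\<And>x i. ph 0 x i \<in> U i" and "\<And>x i. p 0 x i \<in> U i"
    and "madpi_run U f r h \<gamma> \<gamma>h K ph p S"
  shows "(\<forall>k. {x. safety_value \<gamma>h h f (p (Suc k)) x \<ge> 0}
               = {x. safety_value \<gamma>h h f (ph (Suc k)) x \<ge> 0}
             \<and> {x. safety_value \<gamma>h h f (ph (Suc k)) x \<ge> 0} = S (Suc k))
       \<and> (\<forall>k. S k \<subseteq> S (Suc k))
       \<and> (\<forall>ph_star. (\<forall>x. \<forall>\<^sub>F k in sequentially. ph k x = ph_star x) \<longrightarrow>
            (\<forall>\<^sub>F k in sequentially.
               {x. safety_value \<gamma>h h f (p k) x \<ge> 0} = {x. safety_value \<gamma>h h f ph_star x \<ge> 0}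
             \<and> {x. safety_value \<gamma>h h f (ph k) x \<ge> 0} = {x. safety_value \<gamma>h h f ph_star x \<ge> 0}
             \<and> S k = {x. safety_value \<gamma>h h f ph_star x \<ge> 0}))"
proof -
  have "0 < \<gamma>h" "\<gamma>h \<le> 1" "\<forall>x i. ph 0 x i \<in> U i"
    using assms(5,6,8) by auto
  note run_facts = madpi_run_safe_sets[OF this(1,2) assms(10) this(3), unfolded safe_set_def]
  let ?limit = "\<lambda>ph_star k.
          {x. 0 \<le> safety_value \<gamma>h h f (p k) x} = {x. 0 \<le> safety_value \<gamma>h h f ph_star x}
        \<and> {x. 0 \<le> safety_value \<gamma>h h f (ph k) x} = {x. 0 \<le> safety_value \<gamma>h h f ph_star x}
        \<and> S k = {x. 0 \<le> safety_value \<gamma>h h f ph_star x}"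
  have "\<forall>\<^sub>F k in sequentially. ?limit ph_star k"
    if "\<forall>x. \<forall>\<^sub>F k in sequentially. ph k x = ph_star x" for ph_star
  proof -
    have "\<forall>\<^sub>F k in sequentially. ph k = ph_star"
      using that by (simp add: eventually_all_finite fun_eq_iff)
    then have "\<forall>\<^sub>F k in sequentially. ph (Suc k) = ph_star"
      using eventually_sequentially_Suc[of "\<lambda>k. ph k = ph_star"] by blast
    then have "\<forall>\<^sub>F k in sequentially. ?limit ph_star (Suc k)"
      by (rule eventually_mono) (simp add: run_facts)
    then show ?thesis
      using eventually_sequentially_Suc[of "?limit ph_star"] by blast
  qed
  then show ?thesis
    using run_facts by auto
qed

end
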